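(* Let $\beta=\frac{1}{16}$, let $S$ be a string of length $n$, let $d\ge 1$ with $2d\le n$, and let $1\le x<y\le n$. Let $p_1,\dots,p_{2\log n}$ be primes chosen independently and uniformly at random from the primes in $\left[\frac{d}{\beta}\log^2 n,\frac{34d}{\beta}\log^2 n\right]$. If $\mathsf{HAM}(S[x,y],S[x,y]^R)\le 2d$, then with probability at least $1-\frac{1}{n^7}$ every mismatch position of $S[x,y]$ is an isolated mismatch; in particular the number of isolated mismatches equals $\mathsf{HAM}(S[x,y],S[x,y]^R)$.
   Context: $S[x,y]=S[x]S[x+1]\cdots S[y]$; for a string $T$ of length $m$, $T^R$ is its reverse and $\mathsf{HAM}(T,T^R)=|\{i: T[i]\neq T[m+1-i]\}|$. A position $i\in[x,y]$ is a mismatch of $S[x,y]$ if $S[i]\neq S[x+y-i]$. A mismatch $i$ is isolated under $p_j$ if it is the only mismatch position of $S[x,y]$ in its residue class modulo $p_j$; it is an isolated mismatch if it is isolated under $p_j$ for at least one $j\in\{1,\dots,2\log n\}$. $\log$ is base 2. *)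

theory Defs
  imports "HOL-Probability.Probability"
begin

text \<open>Strings are lists; positions are 1-indexed as in the paper: S[i] = S ! (i - 1).\<close>

definition substr :: "'a list \<Rightarrow> nat \<Rightarrow> nat \<Rightarrow> 'a list" where
  "substr S x y = take (y + 1 - x) (drop (x - 1) S)"

definition HAM :: "'a list \<Rightarrow> 'a list \<Rightarrow> nat" where
  "HAM T U = card {i. i < length T \<and> T ! i \<noteq> U ! i}"

definition mismatches :: "'a list \<Rightarrow> nat \<Rightarrow> nat \<Rightarrow> nat set" where
  "mismatches S x y = {i. x \<le> i \<and> i \<le> y \<and> S ! (i - 1) \<noteq> S ! (x + y - i - 1)}"

definition isolated_under :: "'a list \<Rightarrow> nat \<Rightarrow> nat \<Rightarrow> nat \<Rightarrow> nat \<Rightarrow> bool" where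
  "isolated_under S x y p i \<longleftrightarrow> i \<in> mismatches S x y \<and>
     (\<forall>j \<in> mismatches S x y. j mod p = i mod p \<longrightarrow> j = i)"

text \<open>Isolated mismatch w.r.t. the primes ps 0, ..., ps (k-1) (paper: p_1..p_k).\<close>
definition isolated_mismatch :: "'a list \<Rightarrow> nat \<Rightarrow> nat \<Rightarrow> (nat \<Rightarrow> nat) \<Rightarrow> nat \<Rightarrow> nat \<Rightarrow> bool" where
  "isolated_mismatch S x y ps k i \<longleftrightarrow> (\<exists>j < k. isolated_under S x y (ps j) i)"

end

theory Submission
  imports Defs
begin

text \<open>
  Let L = 16 d log^2 n, so that the primes are drawn from [L, 34 L]. Two distinct mismatches i, j
  of S[x,y] collide modulo p iff p divides |i - j|, a positive number below n; such a number has
  at most log n / log L prime divisors p \<ge> L. Hence, as there are at most 2d mismatches, at most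
  2d log n / log L \<le> L / (8 log^2 L) primes of the window fail to isolate a fixed mismatch i.
  Chebyshev's bounds show that the window contains at least 2 L / log^2 L primes, so a random prime
  of the window fails to isolate i with probability at most 1/16. All k \<ge> 2 log n independent
  primes fail with probability at most 16^-k \<le> n^-8, and a union bound over the at most n
  mismatches finishes the proof.
\<close>

section \<open>Chebyshev-type bounds on the number of primes\<close>

lemma prod_primes_dvd:
  fixes A :: "nat set"
  assumes "finite A" and "\<And>p. p \<in> A \<Longrightarrow> prime p" and "\<And>p. p \<in> A \<Longrightarrow> p dvd c"
  shows "\<Prod>A dvd c"
  using assms
proof (induction A rule: finite_induct)
  case (insert q A)
  have "coprime q (\<Prod>A)"
    using insert by (intro prod_coprime_right primes_coprime) auto
  with insert show ?case by (simp add: divides_mult)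
qed simp

lemma odd_central_binomial_le: "(2 * m + 1) choose m \<le> 4 ^ m"
proof -
  have "2 * ((2 * m + 1) choose m) = (\<Sum>i\<in>{m, m + 1}. (2 * m + 1) choose i)"
    using binomial_symmetric[of m "2 * m + 1"] by simp
  also have "\<dots> \<le> (\<Sum>i\<le>2 * m + 1. (2 * m + 1) choose i)"
    by (rule sum_mono2) auto
  also have "\<dots> = 2 * 4 ^ m"
    by (simp only: choose_row_sum) (simp add: power_mult)
  finally show ?thesis by simp
qed

lemma prime_dvd_odd_central_binomial:
  assumes "prime p" "m + 1 < p" "p \<le> 2 * m + 1"
  shows "p dvd ((2 * m + 1) choose m)"
proof -
  have fact_eq: "fact (2 * m + 1) = fact m * fact (m + 1) * ((2 * m + 1) choose m :: nat)"
    using binomial_fact_lemma[of m "2 * m + 1"] by (simp add: algebra_simps)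
  have "p dvd (fact (2 * m + 1) :: nat)"
    using assms prime_dvd_fact_iff[of p "2 * m + 1"] by blast
  then have "p dvd fact m * fact (m + 1) * ((2 * m + 1) choose m)"
    by (simp only: fact_eq)
  moreover have "\<not> p dvd (fact m :: nat)" "\<not> p dvd (fact (m + 1) :: nat)"
    using assms prime_dvd_fact_iff[of p m] prime_dvd_fact_iff[of p "m + 1"] by auto
  ultimately show ?thesis
    using assms(1) by (simp del: fact_Suc add: prime_dvd_mult_iff)
qed

lemma prod_primes_between_le: "\<Prod>{p. prime p \<and> m + 1 < p \<and> p \<le> 2 * m + 1} \<le> (4::nat) ^ m"
proof -
  have "\<Prod>{p. prime p \<and> m + 1 < p \<and> p \<le> 2 * m + 1} dvd (2 * m + 1) choose m"
    by (intro prod_primes_dvd prime_dvd_odd_central_binomial) auto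
  then have "\<Prod>{p. prime p \<and> m + 1 < p \<and> p \<le> 2 * m + 1} \<le> (2 * m + 1) choose m"
    by (rule dvd_imp_le) simp
  also have "\<dots> \<le> 4 ^ m"
    by (rule odd_central_binomial_le)
  finally show ?thesis .
qed

lemma primorial_odd_le:
  "\<Prod>{p::nat. prime p \<and> p \<le> 2 * m + 1} \<le> \<Prod>{p. prime p \<and> p \<le> m + 1} * 4 ^ m"
proof -
  have "{p::nat. prime p \<and> p \<le> 2 * m + 1} =
      {p. prime p \<and> p \<le> m + 1} \<union> {p. prime p \<and> m + 1 < p \<and> p \<le> 2 * m + 1}"
    by auto
  then have "\<Prod>{p::nat. prime p \<and> p \<le> 2 * m + 1} =
      \<Prod>{p. prime p \<and> p \<le> m + 1} * \<Prod>{p. prime p \<and> m + 1 < p \<and> p \<le> 2 * m + 1}"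
    by (simp add: prod.union_disjoint[symmetric] disjoint_iff)
  also have "\<dots> \<le> \<Prod>{p. prime p \<and> p \<le> m + 1} * 4 ^ m"
    by (intro mult_le_mono prod_primes_between_le) auto
  finally show ?thesis .
qed

lemma primorial_le_four_pow: "\<Prod>{p::nat. prime p \<and> p \<le> n} \<le> 4 ^ n"
proof (induction n rule: less_induct)
  case (less n)
  consider "n \<le> 2" | "2 < n" "even n" | m where "2 < n" "n = 2 * m + 1"
    by (metis oddE not_le)
  then show ?case
  proof cases
    case 1
    then have "{p::nat. prime p \<and> p \<le> n} \<subseteq> {2}"
      by (auto dest: prime_ge_2_nat)
    then consider "{p::nat. prime p \<and> p \<le> n} = {}" | "{p::nat. prime p \<and> p \<le> n} = {2}"
      by blast
    then show ?thesis
    proof cases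
      case 2
      then have "2 \<le> n" by blast
      then have "(4::nat) ^ 1 \<le> 4 ^ n" by (intro power_increasing) auto
      with 2 show ?thesis by simp
    qed (simp only: prod.empty one_le_power)
  next
    case 2
    then have "\<not> prime n"
      using prime_odd_nat by auto
    then have "prime p \<and> p \<le> n \<longleftrightarrow> prime p \<and> p \<le> n - 1" for p
      by (cases "p = n") auto
    then have "{p::nat. prime p \<and> p \<le> n} = {p. prime p \<and> p \<le> n - 1}"
      by blast
    also have "\<Prod>\<dots> \<le> 4 ^ (n - 1)"
      using 2 by (intro less.IH) auto
    also have "\<dots> \<le> 4 ^ n"
      by (intro power_increasing) auto
    finally show ?thesis .
  next
    case 3
    then have "\<Prod>{p::nat. prime p \<and> p \<le> n} \<le> \<Prod>{p. prime p \<and> p \<le> m + 1} * 4 ^ m"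
      using primorial_odd_le by simp
    also have "\<dots> \<le> 4 ^ (m + 1) * 4 ^ m"
      using less.IH[of "m + 1"] 3 by simp
    also have "\<dots> = 4 ^ n"
      using 3 by (simp add: power_add[symmetric])
    finally show ?thesis .
  qed
qed

text \<open>Legendre's formula, with the sum cut off at any exponent K beyond which it vanishes.\<close>

lemma multiplicity_fact_eq_sum_div:
  assumes p: "prime (p::nat)" and "n < p ^ K"
  shows "multiplicity p (fact n :: nat) = (\<Sum>i\<in>{1..K}. n div p ^ i)"
  using assms(2)
proof (induction n)
  case (Suc n)
  define e where "e = multiplicity p (Suc n)"
  have "p ^ e dvd Suc n"
    unfolding e_def by (rule multiplicity_dvd)
  then have "p ^ e < p ^ K"
    using dvd_imp_le[OF \<open>p ^ e dvd Suc n\<close>] Suc.prems by linarith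
  then have "e < K"
    using p prime_gt_1_nat power_less_imp_less_exp by blast
  have powers_dvd: "{i\<in>{1..K}. p ^ i dvd Suc n} = {1..e}"
  proof (intro set_eqI iffI)
    fix i assume "i \<in> {i\<in>{1..K}. p ^ i dvd Suc n}"
    then show "i \<in> {1..e}"
      unfolding e_def using p by (auto intro: multiplicity_geI)
  next
    fix i assume "i \<in> {1..e}"
    then have "p ^ i dvd p ^ e"
      by (intro le_imp_power_dvd) auto
    then have "p ^ i dvd Suc n"
      using \<open>p ^ e dvd Suc n\<close> by (rule dvd_trans)
    with \<open>i \<in> {1..e}\<close> \<open>e < K\<close> show "i \<in> {i\<in>{1..K}. p ^ i dvd Suc n}" by auto
  qed
  have "multiplicity p (fact (Suc n) :: nat) = multiplicity p (Suc n * fact n)"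
    by simp
  also have "\<dots> = e + multiplicity p (fact n :: nat)"
    unfolding e_def using p by (intro prime_elem_multiplicity_mult_distrib) auto
  also have "\<dots> = card {i\<in>{1..K}. p ^ i dvd Suc n} + (\<Sum>i\<in>{1..K}. n div p ^ i)"
    using Suc powers_dvd by simp
  also have "\<dots> = (\<Sum>i\<in>{1..K}. n div p ^ i + (if p ^ i dvd Suc n then 1 else 0))"
    by (simp add: sum.distrib sum.If_cases Int_def)
  also have "\<dots> = (\<Sum>i\<in>{1..K}. Suc n div p ^ i)"
    by (intro sum.cong refl) (auto simp: div_Suc dvd_eq_mod_eq_0)
  finally show ?case .
qed simp

lemma two_mult_div_bounds:
  fixes m q :: nat
  shows "2 * (m div q) \<le> (2 * m) div q" and "(2 * m) div q \<le> 2 * (m div q) + 1"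
proof -
  have "(2 * m) div q = 2 * (m div q) + (2 * (m mod q)) div q"
    using div_add1_eq[of m m q] by (simp add: mult_2)
  moreover have "(2 * (m mod q)) div q \<le> 1"
    using less_mult_imp_div_less[of "2 * (m mod q)" 2 q] by (cases "q = 0") auto
  ultimately show "2 * (m div q) \<le> (2 * m) div q" and "(2 * m) div q \<le> 2 * (m div q) + 1"
    by simp_all
qed

lemma multiplicity_central_binomial_eq_sum:
  assumes p: "prime (p::nat)" and K: "2 * m < p ^ K"
  shows "multiplicity p ((2 * m) choose m) = (\<Sum>i\<in>{1..K}. (2 * m) div p ^ i - 2 * (m div p ^ i))"
proof -
  have fact_eq: "fact (2 * m) = fact m * fact m * ((2 * m) choose m :: nat)"
    using binomial_fact_lemma[of m "2 * m"] by (simp add: mult_2)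
  have "multiplicity p (fact (2 * m) :: nat) =
      2 * multiplicity p (fact m :: nat) + multiplicity p ((2 * m) choose m)"
    using p by (simp add: fact_eq prime_elem_multiplicity_mult_distrib)
  then have "multiplicity p ((2 * m) choose m) =
      (\<Sum>i\<in>{1..K}. (2 * m) div p ^ i) - (\<Sum>i\<in>{1..K}. 2 * (m div p ^ i))"
    using multiplicity_fact_eq_sum_div[OF p K] multiplicity_fact_eq_sum_div[OF p, of m K] K
    by (simp add: sum_distrib_left)
  also have "\<dots> = (\<Sum>i\<in>{1..K}. (2 * m) div p ^ i - 2 * (m div p ^ i))"
    by (rule sum_subtractf_nat[symmetric]) (rule two_mult_div_bounds(1))
  finally show ?thesis .
qed

text \<open>Every term of the sum is 0 or 1, and it is 0 as soon as p^i > 2m.\<close>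

lemma multiplicity_central_binomial_le:
  assumes p: "prime (p::nat)" and e: "2 * m < p ^ Suc e"
  shows "multiplicity p ((2 * m) choose m) \<le> e"
proof -
  define K where "K = 2 * m"
  have "2 * m < 2 ^ K"
    unfolding K_def by (rule less_exp)
  also have "\<dots> \<le> p ^ K"
    using prime_ge_2_nat[OF p] by (simp add: power_mono)
  finally have K: "2 * m < p ^ K" .
  have "multiplicity p ((2 * m) choose m) = (\<Sum>i\<in>{1..K}. (2 * m) div p ^ i - 2 * (m div p ^ i))"
    using p K by (rule multiplicity_central_binomial_eq_sum)
  also have "\<dots> \<le> (\<Sum>i\<in>{1..K}. if i \<le> e then 1 else 0)"
  proof (rule sum_mono)
    fix i
    have "(2 * m) div p ^ i = 0" if "\<not> i \<le> e"
    proof -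
      have "p ^ Suc e \<le> p ^ i"
        using that prime_gt_0_nat[OF p] by (intro power_increasing) auto
      with e show ?thesis by simp
    qed
    then show "(2 * m) div p ^ i - 2 * (m div p ^ i) \<le> (if i \<le> e then 1 else 0)"
      using two_mult_div_bounds(2)[of m "p ^ i"] by auto
  qed
  also have "\<dots> \<le> e"
  proof -
    have "card ({1..K} \<inter> {i. i \<le> e}) \<le> card {1..e}"
      by (rule card_mono) auto
    then show ?thesis
      by (simp add: sum.If_cases)
  qed
  finally show ?thesis .
qed

lemma prime_power_multiplicity_central_binomial_le:
  assumes p: "prime (p::nat)" and m: "1 \<le> m"
  shows "p ^ multiplicity p ((2 * m) choose m) \<le> 2 * m"
proof (rule ccontr)
  define e where "e = multiplicity p ((2 * m) choose m)"
  assume "\<not> p ^ multiplicity p ((2 * m) choose m) \<le> 2 * m"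
  then have "2 * m < p ^ e" unfolding e_def by simp
  with m have "e \<noteq> 0" by (intro notI) simp
  with \<open>2 * m < p ^ e\<close> have "e \<le> e - 1"
    unfolding e_def by (intro multiplicity_central_binomial_le[OF p]) simp
  with \<open>e \<noteq> 0\<close> show False by simp
qed

lemma central_binomial_le_pow_card_primes:
  assumes m: "1 \<le> m"
  shows "(2 * m) choose m \<le> (2 * m) ^ card {p::nat. prime p \<and> p \<le> 2 * m}"
proof -
  define C where "C = (2 * m) choose m"
  have "prime_factors C \<subseteq> {p. prime p \<and> p \<le> 2 * m}"
  proof
    fix q assume q: "q \<in> prime_factors C"
    have "fact m * fact m * C = (fact (2 * m) :: nat)"
      using binomial_fact_lemma[of m "2 * m"] unfolding C_def by (simp add: mult_2)
    then have "C dvd fact (2 * m)"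
      by (metis dvd_triv_right)
    with q have "q dvd (fact (2 * m) :: nat)"
      by (blast intro: dvd_trans)
    with q show "q \<in> {p. prime p \<and> p \<le> 2 * m}"
      by (auto simp: prime_dvd_fact_iff in_prime_factors_imp_prime)
  qed
  then have "card (prime_factors C) \<le> card {p::nat. prime p \<and> p \<le> 2 * m}"
    by (intro card_mono) auto
  have "C = (\<Prod>q\<in>prime_factors C. q ^ multiplicity q C)"
    unfolding C_def by (rule prime_factorization_nat) simp
  also have "\<dots> \<le> (\<Prod>q\<in>prime_factors C. 2 * m)"
  proof (rule prod_mono)
    fix q assume "q \<in> prime_factors C"
    then show "0 \<le> q ^ multiplicity q C \<and> q ^ multiplicity q C \<le> 2 * m"
      using prime_power_multiplicity_central_binomial_le[of q m] m
      unfolding C_def by (simp add: in_prime_factors_iff)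
  qed
  also have "\<dots> = (2 * m) ^ card (prime_factors C)"
    by simp
  also have "\<dots> \<le> (2 * m) ^ card {p::nat. prime p \<and> p \<le> 2 * m}"
    using m \<open>card (prime_factors C) \<le> _\<close> by (intro power_increasing) auto
  finally show ?thesis unfolding C_def .
qed

lemma card_primes_le_lower:
  assumes m: "1 \<le> m"
  shows "real (2 * m) \<le> (real (card {p::nat. prime p \<and> p \<le> 2 * m}) + 1) * log 2 (2 * m)"
proof -
  define c where "c = card {p::nat. prime p \<and> p \<le> 2 * m}"
  have "4 ^ m / (2 * real m) \<le> real ((2 * m) choose m)"
    using central_binomial_lower_bound m by simp
  also have "\<dots> \<le> real ((2 * m) ^ c)"
    unfolding c_def using central_binomial_le_pow_card_primes[OF m] by linarith
  finally have "4 ^ m \<le> real (2 * m) ^ c * (2 * real m)"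
    using m by (simp add: field_simps)
  then have "(4::real) ^ m \<le> real (2 * m) ^ (c + 1)"
    by (simp add: mult.commute)
  then have "log 2 ((4::real) ^ m) \<le> log 2 (real (2 * m) ^ (c + 1))"
    using m by (intro log_mono) auto
  moreover have "log 2 ((4::real) ^ m) = 2 * m"
    using log_pow_cancel[of "2::real" 2] by (simp add: log_nat_power)
  moreover have "log 2 (real (2 * m) ^ (c + 1)) = real (c + 1) * log 2 (real (2 * m))"
    by (rule log_nat_power) simp
  ultimately show ?thesis
    unfolding c_def by (simp add: add.commute)
qed

lemma card_primes_above_mult_log_le:
  fixes s :: real
  assumes s: "1 < s"
  shows "real (card {p. prime p \<and> p \<le> a \<and> s < real p}) * log 2 s \<le> 2 * a"
proof -
  define A where "A = {p::nat. prime p \<and> p \<le> a}"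
  define B where "B = {p. prime p \<and> p \<le> a \<and> s < real p}"
  have "finite A"
    unfolding A_def by auto
  have "s ^ card B = (\<Prod>p\<in>B. s)"
    by simp
  also have "\<dots> \<le> (\<Prod>p\<in>B. real p)"
    unfolding B_def using s by (intro prod_mono) auto
  also have "\<dots> \<le> (\<Prod>p\<in>A. real p)"
    using \<open>finite A\<close> prime_ge_1_nat by (intro prod_mono2) (auto simp: A_def B_def)
  also have "\<dots> \<le> 4 ^ a"
    using primorial_le_four_pow[of a] unfolding A_def by (simp flip: of_nat_prod)
  finally have "log 2 (s ^ card B) \<le> log 2 ((2 ^ 2) ^ a)"
    using s by (intro log_mono) auto
  then show ?thesis
    unfolding B_def using s log_pow_cancel[of "2::real" 2] by (simp add: log_nat_power)
qed

lemma card_primes_le_upper: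
  assumes a: "2 \<le> a"
  shows "real (card {p::nat. prime p \<and> p \<le> a}) \<le> sqrt a + 4 * real a / log 2 a"
proof -
  define s where "s = sqrt (real a)"
  define A1 where "A1 = {p::nat. prime p \<and> p \<le> a \<and> real p \<le> s}"
  define A2 where "A2 = {p::nat. prime p \<and> p \<le> a \<and> s < real p}"
  have s: "1 < s"
    unfolding s_def using a by simp
  have "A1 \<subseteq> {1..nat \<lfloor>s\<rfloor>}"
  proof
    fix p assume "p \<in> A1"
    then have "0 < p" "real p \<le> s"
      unfolding A1_def by (auto simp: prime_gt_0_nat)
    then show "p \<in> {1..nat \<lfloor>s\<rfloor>}"
      by (simp add: le_nat_floor)
  qed
  then have card_A1: "real (card A1) \<le> s"
    using s card_mono[of "{1..nat \<lfloor>s\<rfloor>}" A1] by simp linarith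
  have "log 2 s = log 2 a / 2"
    unfolding s_def using log_powr[of 2 "real a" "1/2"] powr_half_sqrt[of "real a"] by simp
  with card_primes_above_mult_log_le[OF s, of a] have "real (card A2) * (log 2 a / 2) \<le> 2 * a"
    unfolding A2_def by metis
  then have card_A2: "real (card A2) \<le> 4 * real a / log 2 a"
    using a by (simp add: field_simps)
  have "{p::nat. prime p \<and> p \<le> a} = A1 \<union> A2"
    unfolding A1_def A2_def by auto
  then have "card {p::nat. prime p \<and> p \<le> a} \<le> card A1 + card A2"
    by (simp add: card_Un_le)
  with card_A1 card_A2 show ?thesis
    unfolding s_def by linarith
qed

lemma four_le_log2:
  fixes x :: real
  assumes "16 \<le> x"
  shows "4 \<le> log 2 x"
proof -
  have "log 2 (2 ^ 4) \<le> log 2 x"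
    using assms by (intro log_mono) auto
  then show ?thesis
    using log_pow_cancel[of "2::real" 4] by simp
qed

lemma log2_less_add_one:
  fixes s :: real
  assumes s: "0 < s"
  shows "log 2 s < s + 1"
proof -
  define n where "n = nat \<lceil>s\<rceil>"
  have "s \<le> real n"
    unfolding n_def by linarith
  have "log 2 s \<le> log 2 (real n)"
    using s \<open>s \<le> real n\<close> by (intro log_mono) auto
  also have "\<dots> < n"
    using s \<open>s \<le> real n\<close> by (intro log2_of_power_less) (auto intro: less_exp)
  also have "\<dots> < s + 1"
    unfolding n_def using s by linarith
  finally show ?thesis .
qed

lemma log2_le_four_sqrt:
  fixes x :: real
  assumes x: "1 \<le> x"
  shows "log 2 x \<le> 4 * sqrt x"
proof -
  have "log 2 x = 2 * log 2 (sqrt x)"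
    using log_powr[of 2 x "1/2"] powr_half_sqrt[of x] x by simp
  also have "\<dots> < 2 * (sqrt x + 1)"
    using log2_less_add_one[of "sqrt x"] x by simp
  also have "\<dots> \<le> 4 * sqrt x"
    using x by simp
  finally show ?thesis by simp
qed

lemma card_primes_le_thirty_four_lower:
  assumes a: "16 \<le> a"
  shows "68 / 5 * real a \<le> (real (card {p::nat. prime p \<and> p \<le> 34 * a}) + 1) * log 2 a"
proof -
  define c where "c = card {p::nat. prime p \<and> p \<le> 34 * a}"
  have "4 \<le> log 2 a"
    using a by (intro four_le_log2) simp
  have "log 2 (34 * a) = log 2 34 + log 2 a"
    using a by (simp add: log_mult)
  moreover have "log 2 34 \<le> log 2 (2 ^ 6 :: real)"
    by (intro log_mono) auto
  moreover have "log 2 (2 ^ 6 :: real) = 6"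
    using log_pow_cancel[of "2::real" 6] by simp
  ultimately have "log 2 (34 * a) \<le> 5 / 2 * log 2 a"
    using \<open>4 \<le> log 2 a\<close> by linarith
  then have "(c + 1) * log 2 (34 * a) \<le> (c + 1) * (5 / 2 * log 2 a)"
    by (intro mult_left_mono) auto
  moreover have "34 * real a \<le> (c + 1) * log 2 (34 * a)"
    using card_primes_le_lower[of "17 * a"] a unfolding c_def by (simp add: ac_simps)
  ultimately show ?thesis
    unfolding c_def by (simp add: algebra_simps)
qed

lemma card_primes_le_mult_log_le:
  assumes a: "16 \<le> a"
  shows "real (card {p::nat. prime p \<and> p \<le> a}) * log 2 a \<le> 8 * real a"
proof -
  have "4 \<le> log 2 a"
    using a by (intro four_le_log2) simp
  have "sqrt a * log 2 a \<le> sqrt a * (4 * sqrt a)"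
    using log2_le_four_sqrt[of a] a by (intro mult_left_mono) auto
  also have "\<dots> = 4 * (sqrt a * sqrt a)"
    by (rule mult.left_commute)
  finally have sqrt_log: "sqrt a * log 2 a \<le> 4 * real a"
    by simp
  have "real (card {p::nat. prime p \<and> p \<le> a}) * log 2 a \<le> (sqrt a + 4 * real a / log 2 a) * log 2 a"
    using a \<open>4 \<le> log 2 a\<close> by (intro mult_right_mono card_primes_le_upper) auto
  also have "\<dots> = sqrt a * log 2 a + 4 * real a"
    using \<open>4 \<le> log 2 a\<close> by (simp add: distrib_right)
  finally show ?thesis
    using sqrt_log by simp
qed

lemma card_primes_interval_lower:
  assumes a: "16 \<le> a"
  shows "2 * (real a + 1) / (log 2 a)\<^sup>2 \<le> real (card {p. prime p \<and> a < p \<and> p \<le> 34 * a})"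
proof -
  define l where "l = log 2 a"
  define D where "D = card {p. prime p \<and> a < p \<and> p \<le> 34 * a}"
  have l4: "4 \<le> l"
    unfolding l_def using a by (intro four_le_log2) simp
  have "4 \<le> sqrt a"
    using real_sqrt_le_mono[of 16 a] a by simp
  then have "4 * sqrt a \<le> sqrt a * sqrt a"
    by (intro mult_right_mono) auto
  with log2_le_four_sqrt[of a] a have l_a: "l \<le> a"
    unfolding l_def by simp
  have "card {p::nat. prime p \<and> p \<le> 34 * a} = card {p::nat. prime p \<and> p \<le> a} + D"
    unfolding D_def by (subst card_Un_disjoint[symmetric]) (auto intro: arg_cong[where f = card])
  with card_primes_le_thirty_four_lower[OF a] card_primes_le_mult_log_le[OF a] l_a
  have D_l: "3 * real a \<le> real D * l"
    unfolding l_def by (simp add: algebra_simps)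
  have "2 * (real a + 1) \<le> 3 * real a * 4"
    using a by simp
  also have "\<dots> \<le> 3 * real a * l"
    using l4 by (intro mult_left_mono) auto
  also have "\<dots> \<le> real D * l * l"
    using D_l l4 by (intro mult_right_mono) auto
  finally show ?thesis
    using l4 unfolding D_def l_def by (simp add: pos_divide_le_eq power2_eq_square)
qed

lemma card_primes_window_lower:
  fixes L :: real
  assumes L: "16 \<le> L"
  shows "2 * L / (log 2 L)\<^sup>2 \<le> card {p. prime p \<and> L \<le> real p \<and> real p \<le> 34 * L}"
proof -
  define a where "a = nat \<lfloor>L\<rfloor>"
  have a: "real a \<le> L" "L < real a + 1" "16 \<le> a"
    unfolding a_def using L by linarith+
  have "2 * L / (log 2 L)\<^sup>2 \<le> 2 * (real a + 1) / (log 2 a)\<^sup>2"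
    using a four_le_log2[of a] by (intro frac_le power_mono log_mono) auto
  also have "\<dots> \<le> card {p. prime p \<and> a < p \<and> p \<le> 34 * a}"
    using a by (intro card_primes_interval_lower)
  also have "\<dots> \<le> card {p. prime p \<and> L \<le> real p \<and> real p \<le> 34 * L}"
  proof (intro of_nat_mono card_mono)
    show "finite {p. prime p \<and> L \<le> real p \<and> real p \<le> 34 * L}"
      by (rule finite_subset[of _ "{..nat \<lfloor>34 * L\<rfloor>}"]) (auto intro: le_nat_floor)
    show "{p. prime p \<and> a < p \<and> p \<le> 34 * a} \<subseteq> {p. prime p \<and> L \<le> real p \<and> real p \<le> 34 * L}"
    proof safe
      fix p assume "a < p" "p \<le> 34 * a"
      then have "real a + 1 \<le> real p" "real p \<le> 34 * real a"
        by linarith+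
      with a show "L \<le> real p" "real p \<le> 34 * L"
        by linarith+
    qed
  qed
  finally show ?thesis .
qed

lemma card_primes_window_pos:
  fixes L :: real
  assumes L: "16 \<le> L"
  shows "0 < card {p. prime p \<and> L \<le> real p \<and> real p \<le> 34 * L}"
proof -
  have "0 < log 2 L"
    using L by simp
  then have "0 < 2 * L / (log 2 L)\<^sup>2"
    using L by (intro divide_pos_pos zero_less_power) auto
  with card_primes_window_lower[OF L] show ?thesis
    by linarith
qed

section \<open>Mismatches and the primes that isolate them\<close>

lemma finite_mismatches: "finite (mismatches S x y)"
  by (rule finite_subset[of _ "{x..y}"]) (auto simp: mismatches_def)

lemma card_mismatches_eq_HAM:
  assumes "1 \<le> x" "x < y" "y \<le> length S"
  shows "card (mismatches S x y) = HAM (substr S x y) (rev (substr S x y))"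
proof -
  define T where "T = substr S x y"
  have len_T: "length T = y + 1 - x"
    unfolding T_def substr_def using assms by simp
  have T_nth: "T ! j = S ! (x - 1 + j)" if "j < y + 1 - x" for j
    unfolding T_def substr_def using that assms by simp
  have rev_T_nth: "rev T ! j = S ! (y - 1 - j)" if "j < y + 1 - x" for j
    using that assms len_T T_nth[of "y + 1 - x - Suc j"] by (simp add: rev_nth)
  define J where "J = {j. j < length T \<and> T ! j \<noteq> rev T ! j}"
  have "mismatches S x y = (\<lambda>j. j + x) ` J"
  proof (intro set_eqI iffI)
    fix i assume "i \<in> mismatches S x y"
    then have i: "x \<le> i" "i \<le> y" "S ! (i - 1) \<noteq> S ! (x + y - i - 1)"
      unfolding mismatches_def by auto
    then have "i - x \<in> J"
      unfolding J_def using T_nth[of "i - x"] rev_T_nth[of "i - x"] len_T assms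
      by (simp add: algebra_simps)
    with i show "i \<in> (\<lambda>j. j + x) ` J"
      by (intro image_eqI[of _ _ "i - x"]) auto
  next
    fix i assume "i \<in> (\<lambda>j. j + x) ` J"
    then obtain j where j: "j \<in> J" "i = j + x"
      by auto
    then show "i \<in> mismatches S x y"
      unfolding mismatches_def J_def using T_nth[of j] rev_T_nth[of j] len_T assms
      by (auto simp: algebra_simps)
  qed
  then have "card (mismatches S x y) = card J"
    by (simp add: card_image)
  then show ?thesis
    unfolding HAM_def J_def T_def by simp
qed

lemma all_mismatches_isolated_event:
  "- (\<Union>i\<in>mismatches S x y. Pi {..<k} (\<lambda>_. {p. \<not> isolated_under S x y p i})) \<subseteq>
     {ps. (\<forall>i \<in> mismatches S x y. isolated_mismatch S x y ps k i)
          \<and> card {i. isolated_mismatch S x y ps k i} = card (mismatches S x y)}"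
proof
  fix ps assume "ps \<in> - (\<Union>i\<in>mismatches S x y. Pi {..<k} (\<lambda>_. {p. \<not> isolated_under S x y p i}))"
  then have all: "\<forall>i \<in> mismatches S x y. isolated_mismatch S x y ps k i"
    unfolding isolated_mismatch_def by auto
  then have "{i. isolated_mismatch S x y ps k i} = mismatches S x y"
    unfolding isolated_mismatch_def isolated_under_def by blast
  with all show "ps \<in> {ps. (\<forall>i \<in> mismatches S x y. isolated_mismatch S x y ps k i)
      \<and> card {i. isolated_mismatch S x y ps k i} = card (mismatches S x y)}"
    by simp
qed

lemma card_large_prime_divisors:
  fixes L :: real
  assumes D: "0 < D" and L: "1 < L"
  shows "real (card {p. prime p \<and> L \<le> real p \<and> p dvd D}) * log 2 L \<le> log 2 D"
proof -
  define T where "T = {p. prime p \<and> L \<le> real p \<and> p dvd D}"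
  have "T \<subseteq> {..D}"
    unfolding T_def using D by (auto intro: dvd_imp_le)
  then have "finite T"
    by (rule finite_subset) simp
  have "\<Prod>T dvd D"
    using \<open>finite T\<close> by (rule prod_primes_dvd) (auto simp: T_def)
  have "L ^ card T = (\<Prod>p\<in>T. L)"
    by simp
  also have "\<dots> \<le> (\<Prod>p\<in>T. real p)"
    using L by (intro prod_mono) (auto simp: T_def)
  also have "\<dots> \<le> real D"
    using dvd_imp_le[OF \<open>\<Prod>T dvd D\<close> D] by (simp flip: of_nat_prod)
  finally have "log 2 (L ^ card T) \<le> log 2 D"
    using L by (intro log_mono) auto
  then show ?thesis
    using L unfolding T_def by (simp add: log_nat_power)
qed

lemma mod_eq_imp_dvd_dist:
  fixes i j p :: nat
  assumes "j mod p = i mod p"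
  shows "p dvd max i j - min i j"
proof (cases "i \<le> j")
  case True
  with assms show ?thesis by (simp add: max_def min_def mod_eq_dvd_iff_nat)
next
  case False
  with assms[symmetric] show ?thesis by (simp add: max_def min_def mod_eq_dvd_iff_nat)
qed

lemma max_minus_min_bounds:
  fixes i j :: nat
  assumes "i \<in> {x..y}" "j \<in> {x..y}" "j \<noteq> i" "y - x < n"
  shows "0 < max i j - min i j" and "max i j - min i j < n"
  using assms by (auto simp: max_def min_def)

lemma colliding_prime_less:
  fixes i j p :: nat
  assumes "i \<in> {x..y}" "j \<in> {x..y}" "j \<noteq> i" "y - x < n" and "j mod p = i mod p"
  shows "p < n"
proof -
  have "p \<le> max i j - min i j"
    using mod_eq_imp_dvd_dist[OF assms(5)] max_minus_min_bounds(1)[OF assms(1-4)] by (rule dvd_imp_le)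
  also have "\<dots> < n"
    using assms(1-4) by (rule max_minus_min_bounds(2))
  finally show ?thesis .
qed

lemma card_colliding_primes_mult_log_le:
  fixes M :: "nat set" and L :: real
  assumes M: "finite M" "M \<subseteq> {x..y}" "i \<in> M" and L: "1 < L" and n: "y - x < n"
  shows "real (card {p. prime p \<and> L \<le> real p \<and> (\<exists>j\<in>M. j \<noteq> i \<and> j mod p = i mod p)}) * log 2 L
           \<le> real (card M) * log 2 n"
proof -
  define C where "C = {p. prime p \<and> L \<le> real p \<and> (\<exists>j\<in>M. j \<noteq> i \<and> j mod p = i mod p)}"
  define T where "T j = {p. prime p \<and> L \<le> real p \<and> p dvd max i j - min i j}" for j
  have dist: "0 < max i j - min i j" "max i j - min i j < n" if "j \<in> M - {i}" for j
  proof -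
    have "i \<in> {x..y}" "j \<in> {x..y}" "j \<noteq> i"
      using that M by auto
    from max_minus_min_bounds[OF this n] show "0 < max i j - min i j" "max i j - min i j < n"
      by blast+
  qed
  have "C \<subseteq> (\<Union>j\<in>M - {i}. T j)"
    unfolding C_def T_def using mod_eq_imp_dvd_dist by blast
  moreover have "finite (T j)" if "j \<in> M - {i}" for j
  proof (rule finite_subset)
    show "T j \<subseteq> {..max i j - min i j}"
      using dist[OF that] unfolding T_def by (auto intro: dvd_imp_le)
  qed simp
  ultimately have "card C \<le> card (\<Union>j\<in>M - {i}. T j)"
    using M by (intro card_mono) auto
  also have "\<dots> \<le> (\<Sum>j\<in>M - {i}. card (T j))"
    using M by (intro card_UN_le) auto
  finally have "real (card C) * log 2 L \<le> (\<Sum>j\<in>M - {i}. real (card (T j))) * log 2 L"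
    using L by (intro mult_right_mono) (auto simp flip: of_nat_sum)
  also have "\<dots> = (\<Sum>j\<in>M - {i}. real (card (T j)) * log 2 L)"
    by (rule sum_distrib_right)
  also have "\<dots> \<le> (\<Sum>j\<in>M - {i}. log 2 n)"
  proof (rule sum_mono)
    fix j assume j: "j \<in> M - {i}"
    have "real (card (T j)) * log 2 L \<le> log 2 (max i j - min i j)"
      unfolding T_def using dist[OF j] L by (intro card_large_prime_divisors) auto
    also have "\<dots> \<le> log 2 n"
      using dist[OF j] by (intro log_mono) auto
    finally show "real (card (T j)) * log 2 L \<le> log 2 n" .
  qed
  also have "\<dots> \<le> real (card M) * log 2 n"
    using M n by (simp add: card_Diff_subset mult_right_mono)
  finally show ?thesis
    unfolding C_def .
qed

lemma card_colliding_primes_le: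
  fixes M :: "nat set" and L :: real
  assumes M: "finite M" "M \<subseteq> {x..y}" "i \<in> M" "card M \<le> 2 * d" and n: "y - x < n"
    and L: "L = 16 * real d * (log 2 n)\<^sup>2" "16 \<le> L"
  shows "real (card {p. prime p \<and> L \<le> real p \<and> (\<exists>j\<in>M. j \<noteq> i \<and> j mod p = i mod p)})
           \<le> L / (8 * (log 2 L)\<^sup>2)"
proof (cases "\<exists>p. prime p \<and> L \<le> real p \<and> (\<exists>j\<in>M. j \<noteq> i \<and> j mod p = i mod p)")
  case True
  then obtain p j where "L \<le> real p" "j \<in> M" "j \<noteq> i" "j mod p = i mod p"
    by blast
  with M n colliding_prime_less[of i x y j n p] have "L < n"
    by force
  then have log_L_n: "log 2 L \<le> log 2 n"
    using L by (intro log_mono) auto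
  have log_L: "4 \<le> log 2 L"
    using L by (intro four_le_log2)
  define c where "c = real (card {p. prime p \<and> L \<le> real p \<and> (\<exists>j\<in>M. j \<noteq> i \<and> j mod p = i mod p)})"
  have "c * log 2 L \<le> real (card M) * log 2 n"
    unfolding c_def using M L n by (intro card_colliding_primes_mult_log_le) auto
  also have "\<dots> \<le> 2 * d * log 2 n"
    using M log_L log_L_n by (intro mult_right_mono) auto
  finally have "c * log 2 L * log 2 L \<le> 2 * d * log 2 n * log 2 L"
    using log_L by (intro mult_right_mono) auto
  also have "\<dots> \<le> 2 * d * log 2 n * log 2 n"
    using log_L log_L_n by (intro mult_left_mono) auto
  also have "\<dots> = L / 8"
    using L by (simp add: power2_eq_square)
  finally show ?thesis
    using log_L unfolding c_def by (simp add: field_simps power2_eq_square)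
next
  case False
  then have "{p. prime p \<and> L \<le> real p \<and> (\<exists>j\<in>M. j \<noteq> i \<and> j mod p = i mod p)} = {}"
    by blast
  moreover have "0 \<le> L / (8 * (log 2 L)\<^sup>2)"
    using L(2) by simp
  ultimately show ?thesis
    by (simp only: card.empty of_nat_0)
qed

lemma card_non_isolating_primes_le:
  fixes L :: real
  assumes i: "i \<in> mismatches S x y" and n: "y - x < n" and d: "card (mismatches S x y) \<le> 2 * d"
    and L: "L = 16 * real d * (log 2 n)\<^sup>2" "16 \<le> L"
  defines "P \<equiv> {p. prime p \<and> L \<le> real p \<and> real p \<le> 34 * L}"
  shows "real (card (P \<inter> {p. \<not> isolated_under S x y p i})) \<le> 1 / 16 * real (card P)"
proof -
  define M where "M = mismatches S x y"
  define C where "C = {p. prime p \<and> L \<le> real p \<and> (\<exists>j\<in>M. j \<noteq> i \<and> j mod p = i mod p)}"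
  have M: "M \<subseteq> {x..y}" "i \<in> M"
    using i unfolding M_def mismatches_def by auto
  have "P \<inter> {p. \<not> isolated_under S x y p i} \<subseteq> C"
    using i unfolding P_def C_def M_def isolated_under_def by auto
  moreover have "C \<subseteq> {..<n}"
    unfolding C_def using M n colliding_prime_less[of i x y _ n] by blast
  ultimately have "card (P \<inter> {p. \<not> isolated_under S x y p i}) \<le> card C"
    by (meson card_mono finite_lessThan finite_subset)
  also have "real (card C) \<le> L / (8 * (log 2 L)\<^sup>2)"
    unfolding C_def using finite_mismatches M d n L unfolding M_def
    by (intro card_colliding_primes_le) auto
  also have "\<dots> = 1 / 16 * (2 * L / (log 2 L)\<^sup>2)"
    by simp
  also have "\<dots> \<le> 1 / 16 * real (card P)"
    unfolding P_def using card_primes_window_lower[OF L(2)] by simp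
  finally show ?thesis
    by simp
qed

section \<open>Independent random primes\<close>

lemma prob_Pi_pmf_of_set_avoid_all:
  fixes M :: "'i set" and N :: "'i \<Rightarrow> 'a set" and r :: real
  assumes P: "finite P" "P \<noteq> {}" and M: "finite M"
    and bad: "\<And>i. i \<in> M \<Longrightarrow> real (card (P \<inter> N i)) \<le> r * real (card P)"
  shows "1 - real (card M) * r ^ k
           \<le> measure_pmf.prob (Pi_pmf {..<k} dflt (\<lambda>_. pmf_of_set P)) (- (\<Union>i\<in>M. Pi {..<k} (\<lambda>_. N i)))"
proof -
  define D where "D = Pi_pmf {..<k} dflt (\<lambda>_. pmf_of_set P)"
  have each: "measure_pmf.prob D (Pi {..<k} (\<lambda>_. N i)) \<le> r ^ k" if "i \<in> M" for i
  proof -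
    have "0 < card P"
      using P by (simp add: card_gt_0_iff)
    then have "card (P \<inter> N i) / card P \<le> r"
      using bad[OF that] by (simp add: divide_le_eq)
    moreover have "measure_pmf.prob D (Pi {..<k} (\<lambda>_. N i)) = (card (P \<inter> N i) / card P) ^ k"
      unfolding D_def using P by (simp add: measure_Pi_pmf_Pi measure_pmf_of_set)
    ultimately show ?thesis
      by (simp add: power_mono)
  qed
  have "measure_pmf.prob D (\<Union>i\<in>M. Pi {..<k} (\<lambda>_. N i)) \<le> (\<Sum>i\<in>M. measure_pmf.prob D (Pi {..<k} (\<lambda>_. N i)))"
    using M by (intro measure_pmf.finite_measure_subadditive_finite) auto
  also have "\<dots> \<le> real (card M) * r ^ k"
    using sum_mono[OF each] by simp
  finally show ?thesis
    unfolding D_def using measure_pmf.prob_compl[of "\<Union>i\<in>M. Pi {..<k} (\<lambda>_. N i)"]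
    by (simp add: Compl_eq_Diff_UNIV)
qed

lemma mult_inverse_sixteen_pow_le:
  assumes "m \<le> n" and n: "1 \<le> n" and k: "2 * log 2 (real n) \<le> real k"
  shows "real m * (1 / 16) ^ k \<le> 1 / real n ^ 7"
proof -
  have "real n ^ 8 = (2 powr log 2 n) powr 8"
    using n by (simp add: powr_realpow)
  also have "\<dots> \<le> 2 powr (4 * real k)"
    using k by (simp add: powr_powr mult.commute)
  also have "\<dots> = 16 ^ k"
    by (simp add: powr_powr[symmetric] powr_realpow)
  finally have "real n ^ 8 \<le> 16 ^ k" .
  then have "real n * (1 / 16) ^ k \<le> 1 / real n ^ 7"
    using n by (simp add: field_simps eval_nat_numeral)
  moreover have "real m * (1 / 16) ^ k \<le> real n * (1 / 16) ^ k"
    using assms(1) by (intro mult_right_mono) auto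
  ultimately show ?thesis
    by linarith
qed

theorem lemma5p2:
  fixes S :: "'a list" and n d x y :: nat and \<beta> :: real
  assumes "\<beta> = 1 / 16"
    and "length S = n"
    and "d \<ge> 1" and "2 * d \<le> n"
    and "1 \<le> x" and "x < y" and "y \<le> n"
    and "HAM (substr S x y) (rev (substr S x y)) \<le> 2 * d"
  defines "k \<equiv> nat \<lceil>2 * log 2 (real n)\<rceil>"
    and "P \<equiv> {p::nat. prime p \<and> real d / \<beta> * (log 2 (real n))\<^sup>2 \<le> real p
                   \<and> real p \<le> 34 * real d / \<beta> * (log 2 (real n))\<^sup>2}"
  shows "measure_pmf.prob (Pi_pmf {..<k} 0 (\<lambda>_. pmf_of_set P))
           {ps. (\<forall>i \<in> mismatches S x y. isolated_mismatch S x y ps k i)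
                \<and> card {i. isolated_mismatch S x y ps k i}
                    = HAM (substr S x y) (rev (substr S x y))}
         \<ge> 1 - 1 / real n ^ 7"
proof -
  define L where "L = 16 * real d * (log 2 n)\<^sup>2"
  have P_eq: "P = {p. prime p \<and> L \<le> real p \<and> real p \<le> 34 * L}"
    unfolding P_def L_def assms(1) by (simp add: mult_ac)
  have "1 * 1 \<le> real d * (log 2 n)\<^sup>2"
    using assms by (intro mult_mono) auto
  then have L16: "16 \<le> L"
    unfolding L_def by simp
  have "finite P" "P \<noteq> {}"
    using card_primes_window_pos[OF L16] unfolding P_eq card_gt_0_iff by blast+
  have card_M: "card (mismatches S x y) = HAM (substr S x y) (rev (substr S x y))"
    using assms by (intro card_mismatches_eq_HAM) auto
  have "1 - 1 / real n ^ 7 \<le> 1 - real (card (mismatches S x y)) * (1 / 16) ^ k"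
    using mult_inverse_sixteen_pow_le[of "card (mismatches S x y)" n k] real_nat_ceiling_ge card_M assms
    unfolding k_def by simp
  also have "\<dots> \<le> measure_pmf.prob (Pi_pmf {..<k} 0 (\<lambda>_. pmf_of_set P))
      (- (\<Union>i\<in>mismatches S x y. Pi {..<k} (\<lambda>_. {p. \<not> isolated_under S x y p i})))"
  proof (rule prob_Pi_pmf_of_set_avoid_all[OF \<open>finite P\<close> \<open>P \<noteq> {}\<close> finite_mismatches])
    fix i assume "i \<in> mismatches S x y"
    then show "real (card (P \<inter> {p. \<not> isolated_under S x y p i})) \<le> 1 / 16 * real (card P)"
      unfolding P_eq using assms card_M L_def L16 by (intro card_non_isolating_primes_le) auto
  qed
  also have "\<dots> \<le> measure_pmf.prob (Pi_pmf {..<k} 0 (\<lambda>_. pmf_of_set P))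
      {ps. (\<forall>i \<in> mismatches S x y. isolated_mismatch S x y ps k i)
           \<and> card {i. isolated_mismatch S x y ps k i} = card (mismatches S x y)}"
    by (intro measure_pmf.finite_measure_mono all_mismatches_isolated_event) simp
  finally show ?thesis
    using card_M by simp
qed

end
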